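(* If $\Phi$ is of type $A_n$ or $C_n$, the set of standard parabolic facets of $\mathcal P_\Phi$ is the set of convex hulls $\operatorname{conv}(I)$ of the maximal abelian ideals $I$ of $\Phi^+$.
   Context: $\Phi$ is a finite irreducible crystallographic root system of rank $n$ with inner product $(-,-)$, basis $\Pi=\{\alpha_1,\dots,\alpha_n\}$ (Bourbaki numbering), positive roots $\Phi^+$, highest root $\theta=\sum_i m_i\alpha_i$; $\breve\omega_i$ is the fundamental coweight ($(\alpha_j,\breve\omega_i)=\delta_{ij}$). $\mathcal P_\Phi=\operatorname{conv}(\Phi)$. For $i\in[n]$, $F_i=\operatorname{conv}\{\beta\in\Phi^+\mid(\beta,\breve\omega_i)=m_i\}$ is a face of $\mathcal P_\Phi$; the standard parabolic facets are those $F_i$ that are facets (faces of dimension $n-1$) of $\mathcal P_\Phi$. The root poset is $\Phi^+$ with $\beta\ge\gamma$ iff $\beta-\gamma$ is a nonnegative integer combination of simple roots; an abelian ideal is a subset of $\Phi^+$ closed upward in the root poset with $(I+I)\cap\Phi=\emptyset$, and maximal means maximal under inclusion. *)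

theory Defs
  imports "HOL-Analysis.Analysis"
begin

definition root_system :: "'a::euclidean_space set \<Rightarrow> bool" where
  "root_system \<Phi> \<longleftrightarrow> finite \<Phi> \<and> 0 \<notin> \<Phi> \<and> span \<Phi> = UNIV \<and>
     (\<forall>a\<in>\<Phi>. \<forall>b\<in>\<Phi>. b - (2 * (b \<bullet> a) / (a \<bullet> a)) *\<^sub>R a \<in> \<Phi>) \<and>
     (\<forall>a\<in>\<Phi>. \<forall>b\<in>\<Phi>. 2 * (b \<bullet> a) / (a \<bullet> a) \<in> \<int>) \<and>
     (\<forall>a\<in>\<Phi>. \<forall>c::real. c *\<^sub>R a \<in> \<Phi> \<longrightarrow> c = 1 \<or> c = -1)"

text \<open>Simple roots alpha 0, ..., alpha (n-1) (Bourbaki numbering shifted by one) form a base.\<close>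
definition is_base :: "'a::euclidean_space set \<Rightarrow> (nat \<Rightarrow> 'a) \<Rightarrow> nat \<Rightarrow> bool" where
  "is_base \<Phi> \<alpha> n \<longleftrightarrow> (\<forall>i<n. \<alpha> i \<in> \<Phi>) \<and> inj_on \<alpha> {..<n} \<and> independent (\<alpha> ` {..<n}) \<and>
     (\<forall>\<beta>\<in>\<Phi>. \<exists>c::nat \<Rightarrow> int. \<beta> = (\<Sum>i<n. of_int (c i) *\<^sub>R \<alpha> i) \<and>
        ((\<forall>i<n. c i \<ge> 0) \<or> (\<forall>i<n. c i \<le> 0)))"

definition nonneg_comb :: "(nat \<Rightarrow> 'a::euclidean_space) \<Rightarrow> nat \<Rightarrow> 'a \<Rightarrow> bool" where
  "nonneg_comb \<alpha> n v \<longleftrightarrow> (\<exists>c::nat \<Rightarrow> nat. v = (\<Sum>i<n. real (c i) *\<^sub>R \<alpha> i))"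

definition pos_roots :: "'a::euclidean_space set \<Rightarrow> (nat \<Rightarrow> 'a) \<Rightarrow> nat \<Rightarrow> 'a set" where
  "pos_roots \<Phi> \<alpha> n = {\<beta>\<in>\<Phi>. nonneg_comb \<alpha> n \<beta>}"

text \<open>Root poset order: root_le alpha n gamma beta means gamma <= beta.\<close>
definition root_le :: "(nat \<Rightarrow> 'a::euclidean_space) \<Rightarrow> nat \<Rightarrow> 'a \<Rightarrow> 'a \<Rightarrow> bool" where
  "root_le \<alpha> n \<gamma> \<beta> \<longleftrightarrow> nonneg_comb \<alpha> n (\<beta> - \<gamma>)"

text \<open>Cartan matrices (entry i j = 2 (alpha_i, alpha_j) / (alpha_j, alpha_j)), 0-indexed.\<close>
definition cartan_A :: "nat \<Rightarrow> nat \<Rightarrow> nat \<Rightarrow> real" where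
  "cartan_A n i j = (if i = j then 2 else if i = j + 1 \<or> j = i + 1 then -1 else 0)"

definition cartan_C :: "nat \<Rightarrow> nat \<Rightarrow> nat \<Rightarrow> real" where
  "cartan_C n i j = (if i = j then 2 else if i = n - 1 \<and> j = n - 2 then -2
      else if i = j + 1 \<or> j = i + 1 then -1 else 0)"

definition has_cartan :: "(nat \<Rightarrow> 'a::euclidean_space) \<Rightarrow> nat \<Rightarrow> (nat \<Rightarrow> nat \<Rightarrow> real) \<Rightarrow> bool" where
  "has_cartan \<alpha> n C \<longleftrightarrow> (\<forall>i<n. \<forall>j<n. 2 * (\<alpha> i \<bullet> \<alpha> j) / (\<alpha> j \<bullet> \<alpha> j) = C i j)"

definition fund_coweight :: "(nat \<Rightarrow> 'a::euclidean_space) \<Rightarrow> nat \<Rightarrow> nat \<Rightarrow> 'a" where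
  "fund_coweight \<alpha> n i = (THE w. \<forall>j<n. \<alpha> j \<bullet> w = (if j = i then 1 else 0))"

definition highest_root :: "'a::euclidean_space set \<Rightarrow> (nat \<Rightarrow> 'a) \<Rightarrow> nat \<Rightarrow> 'a" where
  "highest_root \<Phi> \<alpha> n = (THE \<theta>. \<theta> \<in> pos_roots \<Phi> \<alpha> n \<and> (\<forall>\<beta>\<in>pos_roots \<Phi> \<alpha> n. root_le \<alpha> n \<beta> \<theta>))"

definition std_parabolic_face :: "'a::euclidean_space set \<Rightarrow> (nat \<Rightarrow> 'a) \<Rightarrow> nat \<Rightarrow> nat \<Rightarrow> 'a set" where
  "std_parabolic_face \<Phi> \<alpha> n i = convex hull {\<beta> \<in> pos_roots \<Phi> \<alpha> n.
      \<beta> \<bullet> fund_coweight \<alpha> n i = highest_root \<Phi> \<alpha> n \<bullet> fund_coweight \<alpha> n i}"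

definition abelian_ideal :: "'a::euclidean_space set \<Rightarrow> (nat \<Rightarrow> 'a) \<Rightarrow> nat \<Rightarrow> 'a set \<Rightarrow> bool" where
  "abelian_ideal \<Phi> \<alpha> n I \<longleftrightarrow> I \<subseteq> pos_roots \<Phi> \<alpha> n \<and>
     (\<forall>\<beta>\<in>I. \<forall>\<gamma>\<in>pos_roots \<Phi> \<alpha> n. root_le \<alpha> n \<beta> \<gamma> \<longrightarrow> \<gamma> \<in> I) \<and>
     (\<forall>\<beta>\<in>I. \<forall>\<gamma>\<in>I. \<beta> + \<gamma> \<notin> \<Phi>)"

definition max_abelian_ideal :: "'a::euclidean_space set \<Rightarrow> (nat \<Rightarrow> 'a) \<Rightarrow> nat \<Rightarrow> 'a set \<Rightarrow> bool" where
  "max_abelian_ideal \<Phi> \<alpha> n I \<longleftrightarrow> abelian_ideal \<Phi> \<alpha> n I \<and>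
     (\<forall>J. abelian_ideal \<Phi> \<alpha> n J \<and> I \<subseteq> J \<longrightarrow> J = I)"

end

theory Submission
  imports Defs
begin

text \<open>
  Every positive root arises from a simple root by simple reflections raising the height, so
  the Cartan matrix determines the positive roots: in type \<open>A\<close> they are the interval sums
  \<open>\<alpha> a + \<dots> + \<alpha> (b - 1)\<close>, in type \<open>C\<close> additionally the roots \<open>\<epsilon> a + \<epsilon> b\<close>.
  The face \<open>F i\<close> is the hull of the roots on which the coefficient of \<open>\<alpha> i\<close> attains its
  maximum over \<open>\<Phi>\<close>; this top level is both a face of the polytope and an abelian ideal,
  since no root has twice the maximal coefficient.

  In type \<open>A\<close> the highest root has all coefficients 1, each top level spans the ambient space,
  and the intervals of an abelian ideal pairwise overlap and hence share a point \<open>i\<close>, so the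
  maximal abelian ideals are exactly the top levels.  In type \<open>C\<close> the highest root is
  \<open>2 \<epsilon> 0\<close>: a coefficient 2 at a short simple root forces coefficient 1 at the long one, so
  only the face of the long simple root is a facet, and every abelian ideal lies in its top
  level: with \<open>m\<close> the index of the long simple root, a root \<open>\<epsilon> a - \<epsilon> b\<close> in the ideal
  would bring in \<open>\<epsilon> a - \<epsilon> m\<close> and \<open>\<epsilon> a + \<epsilon> m\<close>, whose sum \<open>2 \<epsilon> a\<close> is a root.
\<close>

lemma aff_dim_eq_dim_minus_one:
  fixes S :: "'a::euclidean_space set"
  assumes "S \<subseteq> {x. w \<bullet> x = M}" and "M \<noteq> 0"
  shows "aff_dim S = int (dim S) - 1"
proof -
  have "affine hull S \<subseteq> {x. w \<bullet> x = M}"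
    using assms(1) by (intro hull_minimal) (auto simp: affine_hyperplane)
  then have "0 \<notin> affine hull S" using assms(2) by auto
  moreover have "dim (insert 0 S) = dim S"
    by (metis dim_span span_insert_0)
  then have "aff_dim (insert 0 S) = int (dim S)"
    by (simp add: aff_dim_zero hull_inc)
  ultimately show ?thesis by (simp add: aff_dim_insert)
qed

lemma ex_nat_eq_iff: "(\<exists>k::nat. x = real k) \<longleftrightarrow> x \<in> \<int> \<and> 0 \<le> x"
proof
  assume "x \<in> \<int> \<and> 0 \<le> x"
  then obtain z where "x = of_int z" "0 \<le> z" by (auto elim: Ints_cases)
  then show "\<exists>k::nat. x = real k" by (intro exI[of _ "nat z"]) auto
qed auto

definition std_parabolic_facets :: "'a::euclidean_space set \<Rightarrow> (nat \<Rightarrow> 'a) \<Rightarrow> nat \<Rightarrow> 'a set set" where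
  "std_parabolic_facets \<Phi> \<alpha> n = {std_parabolic_face \<Phi> \<alpha> n i | i. i < n \<and>
     std_parabolic_face \<Phi> \<alpha> n i face_of convex hull \<Phi> \<and> aff_dim (std_parabolic_face \<Phi> \<alpha> n i) = int n - 1}"

locale root_base =
  fixes \<Phi> :: "'a::euclidean_space set" and \<alpha> :: "nat \<Rightarrow> 'a" and n :: nat
  assumes root_system: "root_system \<Phi>" and dim_eq: "n = DIM('a)" and base: "is_base \<Phi> \<alpha> n"
begin

lemma simple_root_in: "i < n \<Longrightarrow> \<alpha> i \<in> \<Phi>"
  using base unfolding is_base_def by auto

lemma inj_on_simple_roots: "inj_on \<alpha> {..<n}"
  using base unfolding is_base_def by auto

lemma independent_simple_roots: "independent (\<alpha> ` {..<n})"
  using base unfolding is_base_def by auto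

lemma zero_not_root: "0 \<notin> \<Phi>"
  using root_system unfolding root_system_def by auto

lemma finite_roots: "finite \<Phi>"
  using root_system unfolding root_system_def by auto

lemma simple_root_nonzero: "i < n \<Longrightarrow> \<alpha> i \<noteq> 0"
  using simple_root_in zero_not_root by metis

lemma uminus_root: "\<beta> \<in> \<Phi> \<Longrightarrow> - \<beta> \<in> \<Phi>"
proof -
  assume "\<beta> \<in> \<Phi>"
  then have "\<beta> - (2 * (\<beta> \<bullet> \<beta>) / (\<beta> \<bullet> \<beta>)) *\<^sub>R \<beta> \<in> \<Phi>" and "\<beta> \<noteq> 0"
    using root_system zero_not_root unfolding root_system_def by blast+
  then show ?thesis by (simp add: scaleR_2)
qed

lemma span_simple_roots: "span (\<alpha> ` {..<n}) = UNIV"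
proof -
  have "card (\<alpha> ` {..<n}) = dim (UNIV :: 'a set)"
    using inj_on_simple_roots dim_eq by (simp add: card_image)
  then have "UNIV \<subseteq> span (\<alpha> ` {..<n})"
    using independent_simple_roots card_eq_dim[of "\<alpha> ` {..<n}" UNIV] by auto
  then show ?thesis by auto
qed

lemma span_eq_UNIV_if_simple_roots: "(\<And>i. i < n \<Longrightarrow> \<alpha> i \<in> span S) \<Longrightarrow> span S = UNIV"
proof -
  assume "\<And>i. i < n \<Longrightarrow> \<alpha> i \<in> span S"
  then have "span (\<alpha> ` {..<n}) \<subseteq> span S"
    by (intro span_minimal) auto
  then show ?thesis using span_simple_roots by auto
qed

lemma eq_0_if_orthogonal_simple_roots:
  assumes "\<And>j. j < n \<Longrightarrow> \<alpha> j \<bullet> v = 0"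
  shows "v = 0"
proof -
  have "orthogonal v v"
    by (rule orthogonal_to_span[where S="\<alpha> ` {..<n}"])
      (use span_simple_roots assms in \<open>auto simp: orthogonal_def inner_commute\<close>)
  then show ?thesis by (simp add: orthogonal_def)
qed

lemma fund_coweight_exists:
  assumes "i < n"
  shows "\<exists>w. \<forall>j<n. \<alpha> j \<bullet> w = (if j = i then 1 else 0)"
proof -
  let ?S = "\<alpha> ` ({..<n} - {i})"
  have ind: "independent ?S"
    using independent_simple_roots by (rule independent_mono) auto
  have "card ?S = n - 1"
    using inj_on_simple_roots assms by (subst card_image) (auto intro: inj_on_subset)
  then have "dim ?S < DIM('a)"
    using dim_eq_card_independent[OF ind] dim_eq assms by simp
  then obtain x where "x \<noteq> 0" and x: "\<And>y. y \<in> span ?S \<Longrightarrow> orthogonal x y"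
    using orthogonal_to_subspace_exists by blast
  have other: "\<alpha> j \<bullet> x = 0" if "j < n" "j \<noteq> i" for j
    using x[of "\<alpha> j"] that by (auto simp: orthogonal_def inner_commute intro: span_base)
  have nonzero: "\<alpha> i \<bullet> x \<noteq> 0"
  proof
    assume "\<alpha> i \<bullet> x = 0"
    then have "x = 0" using other by (intro eq_0_if_orthogonal_simple_roots) metis
    with \<open>x \<noteq> 0\<close> show False by simp
  qed
  show ?thesis
    by (rule exI[of _ "x /\<^sub>R (\<alpha> i \<bullet> x)"]) (use other nonzero in auto)
qed

lemma fund_coweight_unique: "\<exists>!w. \<forall>j<n. \<alpha> j \<bullet> w = (if j = i then 1 else 0)"
proof -
  have "\<exists>w. \<forall>j<n. \<alpha> j \<bullet> w = (if j = i then 1 else 0)"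
  proof (cases "i < n")
    case False
    then show ?thesis by (intro exI[of _ 0]) simp
  qed (rule fund_coweight_exists)
  moreover have "w = w'"
    if "\<forall>j<n. \<alpha> j \<bullet> w = (if j = i then 1 else 0)" "\<forall>j<n. \<alpha> j \<bullet> w' = (if j = i then 1 else 0)"
    for w w'
    using that eq_0_if_orthogonal_simple_roots[of "w - w'"] by (simp add: inner_diff_right)
  ultimately show ?thesis by blast
qed

lemma inner_fund_coweight: "j < n \<Longrightarrow> \<alpha> j \<bullet> fund_coweight \<alpha> n i = (if j = i then 1 else 0)"
  using theI'[OF fund_coweight_unique] unfolding fund_coweight_def by blast

lemma fund_coweight_out_of_range: "n \<le> i \<Longrightarrow> fund_coweight \<alpha> n i = 0"
  by (rule eq_0_if_orthogonal_simple_roots) (simp add: inner_fund_coweight)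

definition coord :: "'a \<Rightarrow> nat \<Rightarrow> real" where
  "coord \<beta> i = \<beta> \<bullet> fund_coweight \<alpha> n i"

definition lincomb :: "(nat \<Rightarrow> real) \<Rightarrow> 'a" where
  "lincomb c = (\<Sum>i<n. c i *\<^sub>R \<alpha> i)"

lemma coord_lincomb: "j < n \<Longrightarrow> coord (lincomb c) j = c j"
  unfolding coord_def lincomb_def by (simp add: inner_sum_left inner_fund_coweight if_distrib cong: if_cong)

lemma coord_out_of_range: "n \<le> i \<Longrightarrow> coord \<beta> i = 0"
  by (simp add: coord_def fund_coweight_out_of_range)

lemma coord_add: "coord (x + y) j = coord x j + coord y j"
  and coord_diff: "coord (x - y) j = coord x j - coord y j"
  and coord_scaleR: "coord (r *\<^sub>R x) j = r * coord x j"
  and coord_uminus: "coord (- x) j = - coord x j"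
  unfolding coord_def by (auto simp: inner_add_left inner_diff_left)

lemma coord_simple_root: "i < n \<Longrightarrow> coord (\<alpha> i) = (\<lambda>j. if j = i then 1 else 0)"
  by (auto simp: coord_def inner_fund_coweight inner_commute fund_coweight_out_of_range
      dest: leI intro!: ext)

lemma lincomb_coord: "lincomb (coord \<beta>) = \<beta>"
proof -
  obtain u where u: "\<beta> = (\<Sum>v\<in>\<alpha> ` {..<n}. u v *\<^sub>R v)"
    using span_simple_roots span_finite[of "\<alpha> ` {..<n}"] by auto
  then have \<beta>: "\<beta> = lincomb (\<lambda>i. u (\<alpha> i))"
    using inj_on_simple_roots by (simp add: lincomb_def sum.reindex)
  then have "coord \<beta> j = u (\<alpha> j)" if "j < n" for j
    using coord_lincomb[OF that] by simp
  then show ?thesis by (subst (2) \<beta>) (simp add: lincomb_def)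
qed

lemma lincomb_cong: "(\<And>j. j < n \<Longrightarrow> c j = d j) \<Longrightarrow> lincomb c = lincomb d"
  unfolding lincomb_def by simp

lemma coord_inject: "(\<And>j. j < n \<Longrightarrow> coord x j = coord y j) \<Longrightarrow> x = y"
  by (metis lincomb_coord lincomb_cong)

lemma eq_lincomb_if_coord: "(\<And>j. j < n \<Longrightarrow> coord \<beta> j = c j) \<Longrightarrow> \<beta> = lincomb c"
  by (metis lincomb_coord lincomb_cong)

lemma lincomb_add: "lincomb c + lincomb d = lincomb (\<lambda>j. c j + d j)"
  unfolding lincomb_def by (simp add: sum.distrib scaleR_add_left)

lemma lincomb_diff: "lincomb c - lincomb d = lincomb (\<lambda>j. c j - d j)"
  unfolding lincomb_def by (simp add: sum_subtractf scaleR_diff_left)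

lemma lincomb_eq_simple_root: "i < n \<Longrightarrow> (\<And>j. j < n \<Longrightarrow> c j = (if j = i then 1 else 0)) \<Longrightarrow> lincomb c = \<alpha> i"
  by (metis coord_simple_root lincomb_coord lincomb_cong)

lemma root_coord_cases:
  assumes "\<beta> \<in> \<Phi>"
  shows "(\<forall>i<n. coord \<beta> i \<in> \<int>) \<and> ((\<forall>i<n. 0 \<le> coord \<beta> i) \<or> (\<forall>i<n. coord \<beta> i \<le> 0))"
proof -
  obtain c :: "nat \<Rightarrow> int" where c: "\<beta> = lincomb (\<lambda>i. of_int (c i))"
    and sign: "(\<forall>i<n. c i \<ge> 0) \<or> (\<forall>i<n. c i \<le> 0)"
    using base assms unfolding is_base_def lincomb_def by blast
  then have "coord \<beta> i = of_int (c i)" if "i < n" for i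
    using coord_lincomb[OF that] by simp
  then show ?thesis using sign by auto
qed

lemma nonneg_comb_iff: "nonneg_comb \<alpha> n v \<longleftrightarrow> (\<forall>i<n. coord v i \<in> \<int> \<and> 0 \<le> coord v i)"
proof
  assume "nonneg_comb \<alpha> n v"
  then obtain c :: "nat \<Rightarrow> nat" where "v = lincomb (\<lambda>i. real (c i))"
    unfolding nonneg_comb_def lincomb_def by blast
  then show "\<forall>i<n. coord v i \<in> \<int> \<and> 0 \<le> coord v i" by (simp add: coord_lincomb)
next
  assume "\<forall>i<n. coord v i \<in> \<int> \<and> 0 \<le> coord v i"
  then obtain c :: "nat \<Rightarrow> nat" where c: "\<And>i. i < n \<Longrightarrow> coord v i = real (c i)"
    unfolding ex_nat_eq_iff[symmetric] by metis
  have "v = lincomb (\<lambda>i. real (c i))"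
    using lincomb_coord[of v] lincomb_cong[of "coord v"] c by metis
  then show "nonneg_comb \<alpha> n v" unfolding nonneg_comb_def lincomb_def by blast
qed

lemma pos_roots_iff: "\<beta> \<in> pos_roots \<Phi> \<alpha> n \<longleftrightarrow> \<beta> \<in> \<Phi> \<and> (\<forall>i<n. 0 \<le> coord \<beta> i)"
  unfolding pos_roots_def nonneg_comb_iff using root_coord_cases by auto

lemma root_le_iff: "root_le \<alpha> n \<gamma> \<beta> \<longleftrightarrow> (\<forall>i<n. coord \<beta> i - coord \<gamma> i \<in> \<int> \<and> coord \<gamma> i \<le> coord \<beta> i)"
  unfolding root_le_def nonneg_comb_iff coord_diff by simp

lemma pos_root_or_uminus: "\<beta> \<in> \<Phi> \<Longrightarrow> \<beta> \<in> pos_roots \<Phi> \<alpha> n \<or> - \<beta> \<in> pos_roots \<Phi> \<alpha> n"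
  using root_coord_cases[of \<beta>] uminus_root[of \<beta>] by (auto simp: pos_roots_iff coord_uminus)

lemma highest_rootI:
  assumes "\<theta> \<in> pos_roots \<Phi> \<alpha> n" and "\<And>\<beta>. \<beta> \<in> pos_roots \<Phi> \<alpha> n \<Longrightarrow> root_le \<alpha> n \<beta> \<theta>"
  shows "highest_root \<Phi> \<alpha> n = \<theta>"
  unfolding highest_root_def
proof (rule the_equality)
  fix t assume t: "t \<in> pos_roots \<Phi> \<alpha> n \<and> (\<forall>\<beta>\<in>pos_roots \<Phi> \<alpha> n. root_le \<alpha> n \<beta> t)"
  then have "root_le \<alpha> n t \<theta>" "root_le \<alpha> n \<theta> t" using assms by auto
  then show "t = \<theta>" unfolding root_le_iff by (intro coord_inject) (meson order_antisym)
qed (use assms in auto)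

definition coord_level :: "nat \<Rightarrow> real \<Rightarrow> 'a set" where
  "coord_level i M = {\<beta> \<in> pos_roots \<Phi> \<alpha> n. coord \<beta> i = M}"

lemma std_parabolic_face_eq:
  "std_parabolic_face \<Phi> \<alpha> n i = convex hull (coord_level i (coord (highest_root \<Phi> \<alpha> n) i))"
  unfolding std_parabolic_face_def coord_level_def coord_def ..

lemma aff_dim_hull_coord_level:
  "M \<noteq> 0 \<Longrightarrow> aff_dim (convex hull (coord_level i M)) = int (dim (coord_level i M)) - 1"
  by (simp add: aff_dim_convex_hull aff_dim_eq_dim_minus_one[of _ "fund_coweight \<alpha> n i" M]
      coord_level_def coord_def inner_commute subset_iff)

context
  fixes i :: nat and M :: real
  assumes coord_le: "\<And>\<beta>. \<beta> \<in> \<Phi> \<Longrightarrow> coord \<beta> i \<le> M" and M_pos: "0 < M"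
begin

lemma coord_level_root_iff: "coord_level i M = {\<beta> \<in> \<Phi>. coord \<beta> i = M}"
proof -
  have "\<beta> \<in> pos_roots \<Phi> \<alpha> n" if "\<beta> \<in> \<Phi>" "coord \<beta> i = M" for \<beta>
  proof -
    have "i < n" using that M_pos by (cases "i < n") (auto simp: coord_out_of_range)
    then show ?thesis
      using pos_root_or_uminus[OF that(1)] that M_pos by (auto simp: pos_roots_iff coord_uminus)
  qed
  then show ?thesis unfolding coord_level_def pos_roots_iff by blast
qed

text \<open>The supporting hyperplane \<open>coord x i = M\<close> cuts out a face, which is the hull of the
  roots lying on it since \<open>\<Phi>\<close> is finite.\<close>
lemma hull_coord_level_face_of: "convex hull (coord_level i M) face_of convex hull \<Phi>"
proof -
  let ?H = "{x. fund_coweight \<alpha> n i \<bullet> x = M}"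
  have "convex hull \<Phi> \<subseteq> {x. fund_coweight \<alpha> n i \<bullet> x \<le> M}"
    using coord_le convex_halfspace_le[of "fund_coweight \<alpha> n i" M]
    by (intro hull_minimal) (auto simp: coord_def inner_commute)
  then have face: "convex hull \<Phi> \<inter> ?H face_of convex hull \<Phi>"
    by (intro face_of_Int_supporting_hyperplane_le) auto
  have level: "\<Phi> \<inter> ?H = coord_level i M"
    unfolding coord_level_root_iff by (auto simp: coord_def inner_commute)
  have "convex hull (coord_level i M) \<subseteq> ?H"
    using level by (intro hull_minimal) (auto simp: convex_hyperplane)
  then have "convex hull (coord_level i M) \<subseteq> convex hull \<Phi> \<inter> ?H"
    using level hull_mono[of "coord_level i M" \<Phi>] by blast
  moreover obtain S where "S \<subseteq> \<Phi>" and S: "convex hull \<Phi> \<inter> ?H = convex hull S"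
    using face_of_convex_hull_subset[OF finite_imp_compact[OF finite_roots] face] by blast
  then have "S \<subseteq> coord_level i M"
    using level hull_subset[of S convex] by blast
  then have "convex hull \<Phi> \<inter> ?H \<subseteq> convex hull (coord_level i M)"
    using S hull_mono by blast
  ultimately have "convex hull \<Phi> \<inter> ?H = convex hull (coord_level i M)"
    by (rule antisym[rotated])
  with face show ?thesis by simp
qed

lemma coord_level_abelian_ideal: "abelian_ideal \<Phi> \<alpha> n (coord_level i M)"
  unfolding abelian_ideal_def
proof (intro conjI ballI impI)
  fix \<beta> \<gamma> assume \<beta>: "\<beta> \<in> coord_level i M" and \<gamma>: "\<gamma> \<in> pos_roots \<Phi> \<alpha> n"
    and le: "root_le \<alpha> n \<beta> \<gamma>"
  have "i < n"
    using \<beta> M_pos by (cases "i < n") (auto simp: coord_level_def coord_out_of_range)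
  then have "M \<le> coord \<gamma> i"
    using \<beta> le by (auto simp: root_le_iff coord_level_def)
  moreover have "coord \<gamma> i \<le> M"
    using \<gamma> coord_le by (simp add: pos_roots_iff)
  ultimately show "\<gamma> \<in> coord_level i M"
    using \<gamma> by (simp add: coord_level_def)
next
  fix \<beta> \<gamma> assume "\<beta> \<in> coord_level i M" "\<gamma> \<in> coord_level i M"
  then have "coord (\<beta> + \<gamma>) i = 2 * M" by (simp add: coord_level_def coord_add)
  then show "\<beta> + \<gamma> \<notin> \<Phi>" using coord_le[of "\<beta> + \<gamma>"] M_pos by auto
qed (auto simp: coord_level_def)

end

end

definition interval_coeffs :: "nat \<Rightarrow> nat \<Rightarrow> nat \<Rightarrow> real" where
  "interval_coeffs a b j = (if a \<le> j \<and> j < b then 1 else 0)"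

definition cartan_pairing :: "(nat \<Rightarrow> nat \<Rightarrow> real) \<Rightarrow> nat \<Rightarrow> (nat \<Rightarrow> real) \<Rightarrow> nat \<Rightarrow> real" where
  "cartan_pairing C n c i = (\<Sum>j<n. c j * C j i)"

lemma cartan_pairing_cong:
  "(\<And>j. j < n \<Longrightarrow> c j = d j) \<Longrightarrow> cartan_pairing C n c i = cartan_pairing C n d i"
  unfolding cartan_pairing_def by simp

locale root_base_cartan = root_base \<Phi> \<alpha> n for \<Phi> :: "'a::euclidean_space set" and \<alpha> n +
  fixes C :: "nat \<Rightarrow> nat \<Rightarrow> real"
  assumes cartan: "has_cartan \<alpha> n C"
begin

definition coroot_pairing :: "'a \<Rightarrow> nat \<Rightarrow> real" where
  "coroot_pairing \<beta> i = 2 * (\<beta> \<bullet> \<alpha> i) / (\<alpha> i \<bullet> \<alpha> i)"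

lemma reflection_in: "\<beta> \<in> \<Phi> \<Longrightarrow> i < n \<Longrightarrow> \<beta> - coroot_pairing \<beta> i *\<^sub>R \<alpha> i \<in> \<Phi>"
  using root_system simple_root_in unfolding root_system_def coroot_pairing_def by auto

lemma coroot_pairing_Ints: "\<beta> \<in> \<Phi> \<Longrightarrow> i < n \<Longrightarrow> coroot_pairing \<beta> i \<in> \<int>"
  using root_system simple_root_in unfolding root_system_def coroot_pairing_def by auto

lemma root_multiple: "\<beta> \<in> \<Phi> \<Longrightarrow> c *\<^sub>R \<beta> \<in> \<Phi> \<Longrightarrow> c = 1 \<or> c = -1"
  using root_system unfolding root_system_def by auto

lemma coroot_pairing_eq: "i < n \<Longrightarrow> coroot_pairing \<beta> i = cartan_pairing C n (coord \<beta>) i"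
proof -
  assume i: "i < n"
  have "\<beta> \<bullet> \<alpha> i = (\<Sum>j<n. coord \<beta> j * (\<alpha> j \<bullet> \<alpha> i))"
    by (subst (1) lincomb_coord[symmetric]) (simp add: lincomb_def inner_sum_left)
  then have "coroot_pairing \<beta> i = (\<Sum>j<n. coord \<beta> j * (2 * (\<alpha> j \<bullet> \<alpha> i) / (\<alpha> i \<bullet> \<alpha> i)))"
    unfolding coroot_pairing_def by (simp add: sum_distrib_left sum_divide_distrib algebra_simps)
  also have "\<dots> = cartan_pairing C n (coord \<beta>) i"
    using cartan i unfolding has_cartan_def cartan_pairing_def by (intro sum.cong) auto
  finally show ?thesis .
qed

lemma coroot_pairing_simple_root: "i < n \<Longrightarrow> coroot_pairing (\<alpha> i) i = 2"
  unfolding coroot_pairing_def using simple_root_nonzero by simp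

lemma coroot_pairing_diff: "coroot_pairing (x - r *\<^sub>R y) i = coroot_pairing x i - r * coroot_pairing y i"
  unfolding coroot_pairing_def by (simp add: inner_diff_left algebra_simps diff_divide_distrib)

lemma coord_reflection:
  "i < n \<Longrightarrow> coord (\<beta> - coroot_pairing \<beta> i *\<^sub>R \<alpha> i)
     = (\<lambda>j. coord \<beta> j - cartan_pairing C n (coord \<beta>) i * (if j = i then 1 else 0))"
  by (rule ext) (simp add: coord_diff coord_scaleR coord_simple_root coroot_pairing_eq)

lemma lincomb_add_simple_root_in:
  assumes "lincomb c \<in> \<Phi>" "i < n" "cartan_pairing C n c i = - k"
  shows "lincomb (\<lambda>j. c j + (if j = i then k else 0)) \<in> \<Phi>"
proof -
  have "coroot_pairing (lincomb c) i = - k"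
    using assms(2,3) coord_lincomb by (simp add: coroot_pairing_eq cong: cartan_pairing_cong)
  then have "lincomb c + k *\<^sub>R \<alpha> i \<in> \<Phi>"
    using reflection_in[OF assms(1,2)] by simp
  moreover have "lincomb c + k *\<^sub>R \<alpha> i = lincomb (\<lambda>j. c j + (if j = i then k else 0))"
    using assms(2) by (intro coord_inject) (simp add: coord_add coord_scaleR coord_lincomb coord_simple_root)
  ultimately show ?thesis by simp
qed

lemma pos_root_other_coord:
  assumes "\<beta> \<in> pos_roots \<Phi> \<alpha> n" "\<beta> \<notin> \<alpha> ` {..<n}" "i < n"
  shows "\<exists>j<n. j \<noteq> i \<and> 0 < coord \<beta> j"
proof (rule ccontr)
  assume "\<not> ?thesis"
  then have "coord \<beta> j = 0" if "j < n" "j \<noteq> i" for j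
    using that assms(1) by (force simp: pos_roots_iff)
  then have \<beta>: "\<beta> = coord \<beta> i *\<^sub>R \<alpha> i"
    using assms(3) by (intro coord_inject) (simp add: coord_scaleR coord_simple_root)
  then have "coord \<beta> i = 1 \<or> coord \<beta> i = -1"
    using root_multiple[OF simple_root_in[OF assms(3)]] assms(1) by (metis pos_roots_iff)
  then have "\<beta> = \<alpha> i \<or> \<beta> = - \<alpha> i"
    using \<beta> by auto
  then show False
    using assms coord_simple_root[of i] by (auto simp: pos_roots_iff coord_uminus)
qed

text \<open>The coefficient is a positive integer because \<open>0 < \<beta> \<bullet> \<beta>\<close> forces \<open>0 < \<beta> \<bullet> \<alpha> i\<close>
  for some \<open>i\<close> in the support of \<open>\<beta>\<close>; the reflected root stays positive as \<open>\<beta>\<close> is not simple.\<close>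
lemma pos_root_reflect_down:
  assumes \<beta>: "\<beta> \<in> pos_roots \<Phi> \<alpha> n" "\<beta> \<notin> \<alpha> ` {..<n}"
  obtains i where "i < n" "1 \<le> coroot_pairing \<beta> i"
    "\<beta> - coroot_pairing \<beta> i *\<^sub>R \<alpha> i \<in> pos_roots \<Phi> \<alpha> n"
proof -
  have root: "\<beta> \<in> \<Phi>" and nonneg: "\<forall>i<n. 0 \<le> coord \<beta> i" using \<beta> pos_roots_iff by auto
  have "0 < \<beta> \<bullet> \<beta>" using root zero_not_root by auto
  also have "\<beta> \<bullet> \<beta> = (\<Sum>i<n. coord \<beta> i * (\<beta> \<bullet> \<alpha> i))"
    by (subst (1) lincomb_coord[symmetric]) (simp add: lincomb_def inner_sum_right)
  finally obtain i where i: "i < n" "0 < coord \<beta> i * (\<beta> \<bullet> \<alpha> i)"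
    by (metis (no_types, lifting) lessThan_iff not_less sum_nonpos)
  then have "0 < \<beta> \<bullet> \<alpha> i" using nonneg by (auto simp: zero_less_mult_iff)
  then have "0 < coroot_pairing \<beta> i"
    using simple_root_nonzero[OF i(1)] by (simp add: coroot_pairing_def)
  moreover obtain z where "coroot_pairing \<beta> i = of_int z"
    using coroot_pairing_Ints[OF root i(1)] by (auto elim: Ints_cases)
  ultimately have p: "1 \<le> coroot_pairing \<beta> i" by simp
  let ?\<beta>' = "\<beta> - coroot_pairing \<beta> i *\<^sub>R \<alpha> i"
  obtain j where j: "j < n" "j \<noteq> i" "0 < coord \<beta> j"
    using pos_root_other_coord[OF \<beta> i(1)] by blast
  have "?\<beta>' \<in> \<Phi>" using reflection_in[OF root i(1)] .
  moreover have "0 < coord ?\<beta>' j"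
    using j i(1) by (simp add: coord_diff coord_scaleR coord_simple_root)
  ultimately have "?\<beta>' \<in> pos_roots \<Phi> \<alpha> n"
    using root_coord_cases[of ?\<beta>'] j(1) by (force simp: pos_roots_iff)
  with i(1) p show ?thesis by (rule that)
qed

lemma pos_root_descent:
  assumes "\<beta> \<in> pos_roots \<Phi> \<alpha> n" "\<beta> \<notin> \<alpha> ` {..<n}"
  obtains i \<beta>' where "i < n" "\<beta>' \<in> pos_roots \<Phi> \<alpha> n"
    "(\<Sum>j<n. coord \<beta>' j) + 1 \<le> (\<Sum>j<n. coord \<beta> j)"
    "cartan_pairing C n (coord \<beta>') i < 0"
    "coord \<beta> = (\<lambda>j. coord \<beta>' j - cartan_pairing C n (coord \<beta>') i * (if j = i then 1 else 0))"
proof -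
  obtain i where i: "i < n" and p: "1 \<le> coroot_pairing \<beta> i"
    and \<beta>': "\<beta> - coroot_pairing \<beta> i *\<^sub>R \<alpha> i \<in> pos_roots \<Phi> \<alpha> n" (is "?\<beta>' \<in> _")
    using pos_root_reflect_down[OF assms] by blast
  have "(\<Sum>j<n. coord ?\<beta>' j) = (\<Sum>j<n. coord \<beta> j) - coroot_pairing \<beta> i"
    using i by (simp add: coord_diff coord_scaleR coord_simple_root sum_subtractf
        if_distrib[of "\<lambda>x. coroot_pairing \<beta> i * x"] cong: if_cong)
  moreover have pairing: "cartan_pairing C n (coord ?\<beta>') i = - coroot_pairing \<beta> i"
    using i by (simp flip: coroot_pairing_eq add: coroot_pairing_diff coroot_pairing_simple_root)
  moreover have "?\<beta>' - coroot_pairing ?\<beta>' i *\<^sub>R \<alpha> i = \<beta>"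
    using i by (simp add: coroot_pairing_diff coroot_pairing_simple_root)
  then have "coord \<beta> = coord (?\<beta>' - coroot_pairing ?\<beta>' i *\<^sub>R \<alpha> i)"
    by (rule arg_cong[OF sym])
  ultimately show ?thesis
    using that[OF i \<beta>'] p coord_reflection[OF i, of ?\<beta>'] by simp
qed

lemma pos_roots_coord_induct [consumes 1, case_names simple step]:
  assumes "\<beta> \<in> pos_roots \<Phi> \<alpha> n"
    and simple: "\<And>i. i < n \<Longrightarrow> P (\<lambda>j. if j = i then 1 else 0)"
    and step: "\<And>c i. P c \<Longrightarrow> i < n \<Longrightarrow> cartan_pairing C n c i < 0
      \<Longrightarrow> P (\<lambda>j. c j - cartan_pairing C n c i * (if j = i then 1 else 0))"
  shows "P (coord \<beta>)"
proof -
  have "\<forall>\<beta>\<in>pos_roots \<Phi> \<alpha> n. (\<Sum>i<n. coord \<beta> i) \<le> real k \<longrightarrow> P (coord \<beta>)" for k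
  proof (induction k)
    case 0
    have "0 < (\<Sum>i<n. coord \<beta> i)" if "\<beta> \<in> pos_roots \<Phi> \<alpha> n" for \<beta>
    proof -
      have "\<beta> \<noteq> 0" using that zero_not_root by (auto simp: pos_roots_iff)
      then obtain i where "i < n" "coord \<beta> i \<noteq> 0" using coord_inject[of \<beta> 0] by (auto simp: coord_def)
      then show ?thesis
        using that by (intro sum_pos2[of _ i]) (auto simp: pos_roots_iff less_le)
    qed
    then show ?case by force
  next
    case (Suc k)
    show ?case
    proof (intro ballI impI)
      fix \<beta> assume \<beta>: "\<beta> \<in> pos_roots \<Phi> \<alpha> n" and height: "(\<Sum>i<n. coord \<beta> i) \<le> real (Suc k)"
      show "P (coord \<beta>)"
      proof (cases "\<beta> \<in> \<alpha> ` {..<n}")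
        case True
        then show ?thesis using simple coord_simple_root by auto
      next
        case False
        then obtain i \<beta>' where "i < n" "\<beta>' \<in> pos_roots \<Phi> \<alpha> n"
          "(\<Sum>j<n. coord \<beta>' j) + 1 \<le> (\<Sum>j<n. coord \<beta> j)"
          "cartan_pairing C n (coord \<beta>') i < 0"
          "coord \<beta> = (\<lambda>j. coord \<beta>' j - cartan_pairing C n (coord \<beta>') i * (if j = i then 1 else 0))"
          using pos_root_descent[OF \<beta>] by blast
        with Suc.IH height show ?thesis by (simp add: step)
      qed
    qed
  qed
  moreover obtain k :: nat where "(\<Sum>i<n. coord \<beta> i) \<le> real k" using real_arch_simple by blast
  ultimately show ?thesis using assms(1) by blast
qed

lemma lincomb_interval_in:
  assumes "a < b" "b \<le> N" "N \<le> n"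
    and pairing: "\<And>k. a < k \<Longrightarrow> k < N \<Longrightarrow> cartan_pairing C n (interval_coeffs a k) k = -1"
  shows "lincomb (interval_coeffs a b) \<in> \<Phi>"
  using assms(1,2)
proof (induction b)
  case (Suc b)
  show ?case
  proof (cases "a = b")
    case True
    then have "lincomb (interval_coeffs a (Suc b)) = \<alpha> a"
      using Suc.prems assms(3) by (intro lincomb_eq_simple_root) (auto simp: interval_coeffs_def)
    then show ?thesis using Suc.prems assms(3) True simple_root_in by simp
  next
    case False
    then have ab: "a < b" "b < N" using Suc.prems by auto
    then have "lincomb (\<lambda>j. interval_coeffs a b j + (if j = b then 1 else 0)) \<in> \<Phi>"
      using Suc.IH pairing assms(3) by (intro lincomb_add_simple_root_in) simp_all
    moreover have "lincomb (\<lambda>j. interval_coeffs a b j + (if j = b then 1 else 0)) = lincomb (interval_coeffs a (Suc b))"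
      by (intro lincomb_cong) (use ab in \<open>auto simp: interval_coeffs_def\<close>)
    ultimately show ?thesis by simp
  qed
qed simp

end

lemma cartan_pairing_A:
  assumes "i < n"
  shows "cartan_pairing (cartan_A n) n c i
    = 2 * c i - (if 0 < i then c (i - 1) else 0) - (if i + 1 < n then c (i + 1) else 0)"
proof -
  have "cartan_pairing (cartan_A n) n c i = (\<Sum>j<n. (if j = i then 2 * c j else 0)
      - (if j = i + 1 then c j else 0) - (if 0 < i \<and> j = i - 1 then c j else 0))"
    unfolding cartan_pairing_def cartan_A_def by (intro sum.cong) auto
  then show ?thesis
    using assms by (simp add: sum_subtractf)
qed

lemma cartan_pairing_A_interval:
  assumes "a < b" "b \<le> n" "i < n"
  shows "cartan_pairing (cartan_A n) n (interval_coeffs a b) i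
    = (if i + 1 = a \<or> i = b then -1
       else if a \<le> i \<and> i < b then 2 - (if a < i then 1 else 0) - (if i + 1 < b then 1 else 0)
       else 0)"
  using assms by (auto simp: cartan_pairing_A interval_coeffs_def)

locale root_base_A = root_base_cartan \<Phi> \<alpha> n "cartan_A n" for \<Phi> :: "'a::euclidean_space set" and \<alpha> n
begin

abbreviation interval_root :: "nat \<Rightarrow> nat \<Rightarrow> 'a" where
  "interval_root a b \<equiv> lincomb (interval_coeffs a b)"

lemma interval_root_in: "a < b \<Longrightarrow> b \<le> n \<Longrightarrow> interval_root a b \<in> \<Phi>"
  by (rule lincomb_interval_in[of _ _ n]) (simp_all add: cartan_pairing_A_interval)

lemma pos_root_is_interval:
  assumes "\<beta> \<in> pos_roots \<Phi> \<alpha> n"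
  shows "\<exists>a b. a < b \<and> b \<le> n \<and> (\<forall>j<n. coord \<beta> j = interval_coeffs a b j)"
  using assms
proof (induction rule: pos_roots_coord_induct)
  case (simple i)
  then show ?case by (intro exI[of _ i] exI[of _ "Suc i"]) (auto simp: interval_coeffs_def)
next
  case (step c i)
  then obtain a b where ab: "a < b" "b \<le> n" "\<forall>j<n. c j = interval_coeffs a b j" by blast
  then have pairing: "cartan_pairing (cartan_A n) n c i = cartan_pairing (cartan_A n) n (interval_coeffs a b) i"
    by (intro cartan_pairing_cong) auto
  then consider "i + 1 = a" | "i = b"
    using step.hyps(2) cartan_pairing_A_interval[OF ab(1,2) step.hyps(1)] by (auto split: if_splits)
  then show ?case
  proof cases
    case 1
    then show ?thesis using ab pairing cartan_pairing_A_interval[OF ab(1,2) step.hyps(1)]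
      by (intro exI[of _ i] exI[of _ b]) (auto simp: interval_coeffs_def)
  next
    case 2
    then show ?thesis using ab pairing cartan_pairing_A_interval[OF ab(1,2) step.hyps(1)] step.hyps(1)
      by (intro exI[of _ a] exI[of _ "Suc b"]) (auto simp: interval_coeffs_def)
  qed
qed

lemma pos_roots_A_iff: "\<beta> \<in> pos_roots \<Phi> \<alpha> n \<longleftrightarrow> (\<exists>a b. a < b \<and> b \<le> n \<and> \<beta> = interval_root a b)"
proof
  assume "\<beta> \<in> pos_roots \<Phi> \<alpha> n"
  then show "\<exists>a b. a < b \<and> b \<le> n \<and> \<beta> = interval_root a b"
    using pos_root_is_interval eq_lincomb_if_coord by blast
next
  assume "\<exists>a b. a < b \<and> b \<le> n \<and> \<beta> = interval_root a b"
  then show "\<beta> \<in> pos_roots \<Phi> \<alpha> n"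
    using interval_root_in by (auto simp: pos_roots_iff coord_lincomb interval_coeffs_def)
qed

lemma pos_rootE_A:
  assumes "\<beta> \<in> pos_roots \<Phi> \<alpha> n"
  obtains a b where "a < b" "b \<le> n" "\<beta> = interval_root a b"
  using assms pos_roots_A_iff by blast

lemma highest_root_A: "highest_root \<Phi> \<alpha> n = interval_root 0 n"
proof (rule highest_rootI)
  have "0 < n" using dim_eq by simp
  then show "interval_root 0 n \<in> pos_roots \<Phi> \<alpha> n"
    unfolding pos_roots_A_iff by blast
next
  fix \<beta> assume "\<beta> \<in> pos_roots \<Phi> \<alpha> n"
  then obtain a b where "a < b" "b \<le> n" "\<beta> = interval_root a b"
    by (rule pos_rootE_A)
  then show "root_le \<alpha> n \<beta> (interval_root 0 n)"
    by (auto simp: root_le_iff coord_lincomb interval_coeffs_def)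
qed

lemma coord_le_one_A: "\<beta> \<in> \<Phi> \<Longrightarrow> coord \<beta> i \<le> 1"
proof (cases "i < n")
  case True
  assume "\<beta> \<in> \<Phi>"
  then consider "\<beta> \<in> pos_roots \<Phi> \<alpha> n" | "- \<beta> \<in> pos_roots \<Phi> \<alpha> n"
    using pos_root_or_uminus by blast
  then show ?thesis
  proof cases
    case 1
    then obtain a b where "\<beta> = interval_root a b"
      by (rule pos_rootE_A)
    then show ?thesis using True by (simp add: coord_lincomb interval_coeffs_def)
  next
    case 2
    then show ?thesis using True by (auto simp: pos_roots_iff coord_uminus)
  qed
qed (simp add: coord_out_of_range)

lemma std_parabolic_face_A: "i < n \<Longrightarrow> std_parabolic_face \<Phi> \<alpha> n i = convex hull (coord_level i 1)"
  by (simp add: std_parabolic_face_eq highest_root_A coord_lincomb interval_coeffs_def)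

lemma interval_root_in_coord_level:
  "a \<le> i \<Longrightarrow> i < b \<Longrightarrow> b \<le> n \<Longrightarrow> interval_root a b \<in> coord_level i 1"
  using interval_root_in[of a b] by (auto simp: coord_level_def pos_roots_iff coord_lincomb interval_coeffs_def)

lemma span_coord_level_A:
  assumes i: "i < n"
  shows "span (coord_level i 1) = UNIV"
proof (rule span_eq_UNIV_if_simple_roots)
  fix j assume j: "j < n"
  have level: "interval_root a b \<in> span (coord_level i 1)" if "a \<le> i" "i < b" "b \<le> n" for a b
    using that interval_root_in_coord_level by (auto intro: span_base)
  consider "j = i" | "j < i" | "i < j" by linarith
  then show "\<alpha> j \<in> span (coord_level i 1)"
  proof cases
    case 1
    have "\<alpha> j = interval_root i (Suc i)"
      using j 1 by (intro lincomb_eq_simple_root[symmetric]) (auto simp: interval_coeffs_def)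
    then show ?thesis using level[of i "Suc i"] i by simp
  next
    case 2
    have "\<alpha> j = interval_root j (Suc i) - interval_root (Suc j) (Suc i)"
      unfolding lincomb_diff using j 2 by (intro lincomb_eq_simple_root[symmetric]) (auto simp: interval_coeffs_def)
    then show ?thesis using level[of j "Suc i"] level[of "Suc j" "Suc i"] i 2 by (simp add: span_diff)
  next
    case 3
    have "\<alpha> j = interval_root i (Suc j) - interval_root i j"
      unfolding lincomb_diff using j 3 by (intro lincomb_eq_simple_root[symmetric]) (auto simp: interval_coeffs_def)
    then show ?thesis using level[of i "Suc j"] level[of i j] j 3 by (simp add: span_diff)
  qed
qed

lemma aff_dim_std_parabolic_face_A:
  assumes "i < n"
  shows "aff_dim (std_parabolic_face \<Phi> \<alpha> n i) = int n - 1"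
proof -
  have "dim (coord_level i 1) = n"
    using span_coord_level_A[OF assms] dim_eq dim_span[of "coord_level i 1"] by simp
  then show ?thesis
    using aff_dim_hull_coord_level[of 1 i] assms by (simp add: std_parabolic_face_A)
qed

lemma std_parabolic_face_A_face_of: "i < n \<Longrightarrow> std_parabolic_face \<Phi> \<alpha> n i face_of convex hull \<Phi>"
  using hull_coord_level_face_of[of i 1] coord_le_one_A by (simp add: std_parabolic_face_A)

text \<open>If \<open>[a,b)\<close> lay entirely left of \<open>[c,d)\<close>, the upward closure would put \<open>[a,c)\<close>
  into the ideal, and \<open>[a,c) + [c,d)\<close> is a root.\<close>
lemma abelian_ideal_intervals_overlap:
  assumes J: "abelian_ideal \<Phi> \<alpha> n J"
    and "interval_root a b \<in> J" "interval_root c d \<in> J" "a < b" "c < d" "d \<le> n"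
  shows "c < b"
proof (rule ccontr)
  assume "\<not> c < b"
  then have "interval_root a c \<in> pos_roots \<Phi> \<alpha> n" "root_le \<alpha> n (interval_root a b) (interval_root a c)"
    using assms(4-6) interval_root_in[of a c]
    by (auto simp: pos_roots_iff root_le_iff coord_lincomb interval_coeffs_def)
  then have "interval_root a c \<in> J"
    using J assms(2) unfolding abelian_ideal_def by blast
  then have "interval_root a c + interval_root c d \<notin> \<Phi>"
    using J assms(3) unfolding abelian_ideal_def by blast
  moreover have "interval_root a c + interval_root c d = interval_root a d"
    unfolding lincomb_add using \<open>\<not> c < b\<close> assms(4,5) by (intro lincomb_cong) (auto simp: interval_coeffs_def)
  moreover have "interval_root a d \<in> \<Phi>"
    using \<open>\<not> c < b\<close> assms(4-6) by (intro interval_root_in) auto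
  ultimately show False by simp
qed

text \<open>The intervals of an abelian ideal pairwise overlap, so the largest left end point lies in all of them.\<close>
lemma abelian_ideal_A_subset_coord_level:
  assumes J: "abelian_ideal \<Phi> \<alpha> n J" and "J \<noteq> {}"
  obtains i where "i < n" "J \<subseteq> coord_level i 1"
proof -
  have J_pos: "J \<subseteq> pos_roots \<Phi> \<alpha> n" using J unfolding abelian_ideal_def by blast
  define L where "L = {a. \<exists>b. a < b \<and> b \<le> n \<and> interval_root a b \<in> J}"
  have "finite L" unfolding L_def by (rule finite_subset[of _ "{..n}"]) auto
  moreover have "L \<noteq> {}"
    using \<open>J \<noteq> {}\<close> J_pos unfolding L_def by (blast elim: pos_rootE_A)
  ultimately have "Max L \<in> L" by (rule Max_in)
  then obtain b where b: "Max L < b" "b \<le> n" "interval_root (Max L) b \<in> J"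
    unfolding L_def by blast
  have "J \<subseteq> coord_level (Max L) 1"
  proof
    fix \<beta> assume "\<beta> \<in> J"
    then obtain c d where cd: "c < d" "d \<le> n" "\<beta> = interval_root c d"
      using J_pos by (blast elim: pos_rootE_A)
    then have "c \<le> Max L"
      using \<open>finite L\<close> \<open>\<beta> \<in> J\<close> unfolding L_def by (intro Max_ge) auto
    moreover have "Max L < d"
      using abelian_ideal_intervals_overlap[OF J _ b(3) cd(1) b(1,2)] \<open>\<beta> \<in> J\<close> cd(3) by simp
    ultimately show "\<beta> \<in> coord_level (Max L) 1"
      using cd by (simp add: interval_root_in_coord_level)
  qed
  moreover have "Max L < n" using b by simp
  ultimately show ?thesis using that by blast
qed

lemma max_abelian_ideal_A_iff: "max_abelian_ideal \<Phi> \<alpha> n I \<longleftrightarrow> (\<exists>i<n. I = coord_level i 1)"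
proof -
  have abelian: "abelian_ideal \<Phi> \<alpha> n (coord_level i 1)" for i
    using coord_level_abelian_ideal coord_le_one_A by simp
  have simple: "\<alpha> i \<in> coord_level i 1" if "i < n" for i
    using that simple_root_in by (simp add: coord_level_def pos_roots_iff coord_simple_root)
  have maximal: "J = coord_level i 1"
    if i: "i < n" and J: "abelian_ideal \<Phi> \<alpha> n J" and sub: "coord_level i 1 \<subseteq> J" for i J
  proof -
    obtain k where "k < n" "J \<subseteq> coord_level k 1"
      using abelian_ideal_A_subset_coord_level[OF J] simple i sub by blast
    moreover from this have "\<alpha> i \<in> coord_level k 1"
      using simple[OF i] sub by blast
    then have "k = i"
      using i by (simp add: coord_level_def coord_simple_root split: if_splits)
    ultimately show ?thesis using sub by blast
  qed
  show ?thesis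
  proof
    assume I: "max_abelian_ideal \<Phi> \<alpha> n I"
    have "I \<noteq> {}"
      using I abelian[of 0] simple[of 0] dim_eq unfolding max_abelian_ideal_def by force
    then obtain i where "i < n" "I \<subseteq> coord_level i 1"
      using I abelian_ideal_A_subset_coord_level unfolding max_abelian_ideal_def by metis
    then show "\<exists>i<n. I = coord_level i 1"
      using I abelian unfolding max_abelian_ideal_def by metis
  qed (use abelian maximal in \<open>auto simp: max_abelian_ideal_def\<close>)
qed

theorem std_parabolic_facets_A:
  "std_parabolic_facets \<Phi> \<alpha> n = {convex hull I | I. max_abelian_ideal \<Phi> \<alpha> n I}"
proof -
  have "std_parabolic_facets \<Phi> \<alpha> n = std_parabolic_face \<Phi> \<alpha> n ` {..<n}"
    using std_parabolic_face_A_face_of aff_dim_std_parabolic_face_A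
    unfolding std_parabolic_facets_def by auto
  also have "\<dots> = (\<lambda>i. convex hull (coord_level i 1)) ` {..<n}"
    by (simp add: std_parabolic_face_A)
  also have "\<dots> = {convex hull I | I. max_abelian_ideal \<Phi> \<alpha> n I}"
    by (auto simp: max_abelian_ideal_A_iff)
  finally show ?thesis .
qed

end

text \<open>In the usual realisation of \<open>C\<^sub>n\<close> with \<open>\<alpha> i = \<epsilon> i - \<epsilon> (i + 1)\<close> for \<open>i < m\<close> and
  \<open>\<alpha> m = 2 \<epsilon> m\<close>, the coefficient vectors \<open>interval_coeffs a b\<close> and \<open>plus_coeffs m a b\<close>
  are those of \<open>\<epsilon> a - \<epsilon> b\<close> and \<open>\<epsilon> a + \<epsilon> b\<close>.\<close>
definition plus_coeffs :: "nat \<Rightarrow> nat \<Rightarrow> nat \<Rightarrow> nat \<Rightarrow> real" where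
  "plus_coeffs m a b j = interval_coeffs a b j + 2 * interval_coeffs b m j + (if j = m then 1 else 0)"

lemma cartan_pairing_C:
  assumes "2 \<le> n"
  shows "cartan_pairing (cartan_C n) n c i
    = cartan_pairing (cartan_A n) n c i - (if i = n - 2 then c (n - 1) else 0)"
proof -
  have "cartan_pairing (cartan_C n) n c i
      = (\<Sum>j<n. c j * cartan_A n j i - (if j = n - 1 \<and> i = n - 2 then c j else 0))"
    unfolding cartan_pairing_def using assms by (intro sum.cong) (auto simp: cartan_C_def cartan_A_def)
  then show ?thesis
    using assms by (cases "i = n - 2") (simp_all add: sum_subtractf cartan_pairing_def)
qed

lemma cartan_pairing_C_interval:
  assumes "a < b" "b \<le> m" "i \<le> m" "n = Suc m"
  shows "cartan_pairing (cartan_C n) n (interval_coeffs a b) i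
    = cartan_pairing (cartan_A n) n (interval_coeffs a b) i"
  using assms by (simp add: cartan_pairing_C interval_coeffs_def)

lemma cartan_pairing_C_explicit:
  assumes "i \<le> m" "1 \<le> m" "n = Suc m"
  shows "cartan_pairing (cartan_C n) n c i
    = 2 * c i - (if 0 < i then c (i - 1) else 0) - (if i < m then (if i + 1 = m then 2 else 1) * c (i + 1) else 0)"
  using assms by (auto simp: cartan_pairing_C cartan_pairing_A)

lemma cartan_pairing_C_plus_coeffs_neg:
  assumes "a \<le> b" "b \<le> m" "i \<le> m" "1 \<le> m" "n = Suc m"
    and "cartan_pairing (cartan_C n) n (plus_coeffs m a b) i < 0"
  shows "i + 1 = a \<and> cartan_pairing (cartan_C n) n (plus_coeffs m a b) i = (if a < b then -1 else -2)
    \<or> a < i \<and> i + 1 = b \<and> cartan_pairing (cartan_C n) n (plus_coeffs m a b) i = -1"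
  using assms unfolding cartan_pairing_C_explicit[OF assms(3-5)]
  by (auto simp: plus_coeffs_def interval_coeffs_def split: if_splits)

locale root_base_C = root_base_cartan \<Phi> \<alpha> n "cartan_C n" for \<Phi> :: "'a::euclidean_space set" and \<alpha> n +
  assumes rank: "2 \<le> n"
begin

definition long_index :: nat where
  "long_index = n - 1"

lemma n_eq_Suc_long_index: "n = Suc long_index"
  and long_index_pos: "1 \<le> long_index"
  using rank unfolding long_index_def by auto

abbreviation diff_root :: "nat \<Rightarrow> nat \<Rightarrow> 'a" where
  "diff_root a b \<equiv> lincomb (interval_coeffs a b)"

abbreviation sum_root :: "nat \<Rightarrow> nat \<Rightarrow> 'a" where
  "sum_root a b \<equiv> lincomb (plus_coeffs long_index a b)"

lemma pairing_diff_root: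
  "a < b \<Longrightarrow> b \<le> long_index \<Longrightarrow> i \<le> long_index \<Longrightarrow> cartan_pairing (cartan_C n) n (interval_coeffs a b) i
    = (if i + 1 = a \<or> i = b then -1
       else if a \<le> i \<and> i < b then 2 - (if a < i then 1 else 0) - (if i + 1 < b then 1 else 0)
       else 0)"
  using n_eq_Suc_long_index
  by (simp add: cartan_pairing_C_interval cartan_pairing_A_interval)

lemma diff_root_in:
  assumes "a < b" "b \<le> long_index"
  shows "diff_root a b \<in> \<Phi>"
proof (rule lincomb_interval_in[OF assms])
  show "long_index \<le> n" using n_eq_Suc_long_index by simp
  show "cartan_pairing (cartan_C n) n (interval_coeffs a k) k = -1" if "a < k" "k < long_index" for k
    using that by (simp add: pairing_diff_root)
qed

lemma sum_root_in_long_index: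
  assumes "a \<le> long_index"
  shows "sum_root a long_index \<in> \<Phi>"
proof (cases "a = long_index")
  case True
  then have "sum_root a long_index = \<alpha> long_index"
    using n_eq_Suc_long_index by (intro lincomb_eq_simple_root) (auto simp: plus_coeffs_def interval_coeffs_def)
  then show ?thesis using n_eq_Suc_long_index simple_root_in by simp
next
  case False
  then have a: "a < long_index" using assms by simp
  then have "lincomb (\<lambda>j. interval_coeffs a long_index j + (if j = long_index then 1 else 0)) \<in> \<Phi>"
    by (intro lincomb_add_simple_root_in)
      (use diff_root_in n_eq_Suc_long_index in \<open>simp_all add: pairing_diff_root\<close>)
  moreover have "lincomb (\<lambda>j. interval_coeffs a long_index j + (if j = long_index then 1 else 0))
      = sum_root a long_index"
    by (intro lincomb_cong) (auto simp: plus_coeffs_def interval_coeffs_def)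
  ultimately show ?thesis by simp
qed

lemma sum_root_in_short:
  assumes "a < b" "b \<le> long_index"
  shows "sum_root a b \<in> \<Phi>"
  using assms(2)
proof (induction b rule: inc_induct)
  case base
  then show ?case using sum_root_in_long_index assms by simp
next
  case (step k)
  then have ak: "a < k" "k < long_index" using assms(1) by auto
  have "cartan_pairing (cartan_C n) n (plus_coeffs long_index a (Suc k)) k = -1"
    by (subst cartan_pairing_C_explicit[OF _ long_index_pos n_eq_Suc_long_index])
      (use ak in \<open>auto simp: plus_coeffs_def interval_coeffs_def\<close>)
  then have "lincomb (\<lambda>j. plus_coeffs long_index a (Suc k) j + (if j = k then 1 else 0)) \<in> \<Phi>"
    using step.IH ak n_eq_Suc_long_index by (intro lincomb_add_simple_root_in) simp_all
  moreover have "lincomb (\<lambda>j. plus_coeffs long_index a (Suc k) j + (if j = k then 1 else 0)) = sum_root a k"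
    using ak by (intro lincomb_cong) (auto simp: plus_coeffs_def interval_coeffs_def)
  ultimately show ?case by simp
qed

lemma sum_root_in_long:
  assumes "a \<le> long_index"
  shows "sum_root a a \<in> \<Phi>"
  using assms
proof (induction a rule: inc_induct)
  case base
  then show ?case using sum_root_in_long_index by simp
next
  case (step k)
  have "cartan_pairing (cartan_C n) n (plus_coeffs long_index (Suc k) (Suc k)) k = -2"
    by (subst cartan_pairing_C_explicit[OF _ long_index_pos n_eq_Suc_long_index])
      (use step.hyps in \<open>auto simp: plus_coeffs_def interval_coeffs_def\<close>)
  then have "lincomb (\<lambda>j. plus_coeffs long_index (Suc k) (Suc k) j + (if j = k then 2 else 0)) \<in> \<Phi>"
    using step n_eq_Suc_long_index by (intro lincomb_add_simple_root_in) simp_all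
  moreover have "lincomb (\<lambda>j. plus_coeffs long_index (Suc k) (Suc k) j + (if j = k then 2 else 0)) = sum_root k k"
    by (intro lincomb_cong) (use step.hyps in \<open>auto simp: plus_coeffs_def interval_coeffs_def\<close>)
  ultimately show ?case by simp
qed

lemma sum_root_in: "a \<le> b \<Longrightarrow> b \<le> long_index \<Longrightarrow> sum_root a b \<in> \<Phi>"
  using sum_root_in_short sum_root_in_long by (cases "a = b") auto

definition pos_coeffs_C :: "(nat \<Rightarrow> real) \<Rightarrow> bool" where
  "pos_coeffs_C c \<longleftrightarrow>
     (\<exists>a b. a < b \<and> b \<le> long_index \<and> (\<forall>j<n. c j = interval_coeffs a b j)) \<or>
     (\<exists>a b. a \<le> b \<and> b \<le> long_index \<and> (\<forall>j<n. c j = plus_coeffs long_index a b j))"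

lemma pos_coeffs_C_reflect_interval:
  assumes ab: "a < b" "b \<le> long_index" "\<forall>j<n. c j = interval_coeffs a b j"
    and i: "i < n" and neg: "cartan_pairing (cartan_C n) n c i < 0"
  shows "pos_coeffs_C (\<lambda>j. c j - cartan_pairing (cartan_C n) n c i * (if j = i then 1 else 0))"
proof -
  have "cartan_pairing (cartan_C n) n c i = cartan_pairing (cartan_C n) n (interval_coeffs a b) i"
    using ab(3) by (intro cartan_pairing_cong) auto
  also have "\<dots> = (if i + 1 = a \<or> i = b then -1
       else if a \<le> i \<and> i < b then 2 - (if a < i then 1 else 0) - (if i + 1 < b then 1 else 0)
       else 0)"
    using ab i n_eq_Suc_long_index by (simp add: pairing_diff_root)
  finally have pairing_value: "cartan_pairing (cartan_C n) n c i = \<dots>" .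
  with neg consider "i + 1 = a" | "i = b" "b < long_index" | "i = b" "b = long_index"
    using ab(2) by (cases "b < long_index") (auto split: if_splits)
  then show ?thesis
  proof cases
    case 1
    then show ?thesis using ab pairing_value unfolding pos_coeffs_C_def
      by (intro disjI1 exI[of _ i] exI[of _ b]) (auto simp: interval_coeffs_def)
  next
    case 2
    then show ?thesis using ab pairing_value unfolding pos_coeffs_C_def
      by (intro disjI1 exI[of _ a] exI[of _ "Suc b"]) (auto simp: interval_coeffs_def)
  next
    case 3
    then show ?thesis using ab pairing_value unfolding pos_coeffs_C_def
      by (intro disjI2 exI[of _ a] exI[of _ long_index]) (auto simp: interval_coeffs_def plus_coeffs_def)
  qed
qed

lemma pos_coeffs_C_reflect_plus:
  assumes ab: "a \<le> b" "b \<le> long_index" "\<forall>j<n. c j = plus_coeffs long_index a b j"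
    and i: "i < n" and neg: "cartan_pairing (cartan_C n) n c i < 0"
  shows "pos_coeffs_C (\<lambda>j. c j - cartan_pairing (cartan_C n) n c i * (if j = i then 1 else 0))"
proof -
  have pairing: "cartan_pairing (cartan_C n) n c i = cartan_pairing (cartan_C n) n (plus_coeffs long_index a b) i"
    using ab(3) by (intro cartan_pairing_cong) auto
  have "i \<le> long_index" using i n_eq_Suc_long_index by simp
  from cartan_pairing_C_plus_coeffs_neg[OF ab(1,2) this long_index_pos n_eq_Suc_long_index] neg
  consider "i + 1 = a" "a < b" "cartan_pairing (cartan_C n) n c i = -1"
    | "i + 1 = a" "a = b" "cartan_pairing (cartan_C n) n c i = -2"
    | "a < i" "i + 1 = b" "cartan_pairing (cartan_C n) n c i = -1"
    unfolding pairing using ab(1) by (cases "a < b") auto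
  then show ?thesis
  proof cases
    case 1
    then show ?thesis using ab unfolding pos_coeffs_C_def
      by (intro disjI2 exI[of _ i] exI[of _ b]) (auto simp: interval_coeffs_def plus_coeffs_def)
  next
    case 2
    then show ?thesis using ab unfolding pos_coeffs_C_def
      by (intro disjI2 exI[of _ i] exI[of _ i]) (auto simp: interval_coeffs_def plus_coeffs_def)
  next
    case 3
    then show ?thesis using ab unfolding pos_coeffs_C_def
      by (intro disjI2 exI[of _ a] exI[of _ i]) (auto simp: interval_coeffs_def plus_coeffs_def)
  qed
qed

lemma pos_root_coeffs_C: "\<beta> \<in> pos_roots \<Phi> \<alpha> n \<Longrightarrow> pos_coeffs_C (coord \<beta>)"
proof (induction rule: pos_roots_coord_induct)
  case (simple i)
  show ?case
  proof (cases "i < long_index")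
    case True
    then show ?thesis unfolding pos_coeffs_C_def
      by (intro disjI1 exI[of _ i] exI[of _ "Suc i"]) (auto simp: interval_coeffs_def)
  next
    case False
    then have "i = long_index" using simple n_eq_Suc_long_index by simp
    then show ?thesis unfolding pos_coeffs_C_def
      by (intro disjI2 exI[of _ i] exI[of _ i]) (auto simp: interval_coeffs_def plus_coeffs_def)
  qed
next
  case (step c i)
  then show ?case
    using pos_coeffs_C_reflect_interval pos_coeffs_C_reflect_plus unfolding pos_coeffs_C_def[of c] by blast
qed

lemma pos_roots_C_iff: "\<beta> \<in> pos_roots \<Phi> \<alpha> n \<longleftrightarrow>
    (\<exists>a b. a < b \<and> b \<le> long_index \<and> \<beta> = diff_root a b) \<or> (\<exists>a b. a \<le> b \<and> b \<le> long_index \<and> \<beta> = sum_root a b)"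
proof
  assume "\<beta> \<in> pos_roots \<Phi> \<alpha> n"
  then have "pos_coeffs_C (coord \<beta>)" by (rule pos_root_coeffs_C)
  then show "(\<exists>a b. a < b \<and> b \<le> long_index \<and> \<beta> = diff_root a b) \<or>
      (\<exists>a b. a \<le> b \<and> b \<le> long_index \<and> \<beta> = sum_root a b)"
    unfolding pos_coeffs_C_def using eq_lincomb_if_coord by blast
next
  assume "(\<exists>a b. a < b \<and> b \<le> long_index \<and> \<beta> = diff_root a b) \<or>
      (\<exists>a b. a \<le> b \<and> b \<le> long_index \<and> \<beta> = sum_root a b)"
  then show "\<beta> \<in> pos_roots \<Phi> \<alpha> n"
    using diff_root_in sum_root_in
    by (auto simp: pos_roots_iff coord_lincomb interval_coeffs_def plus_coeffs_def)
qed

lemma pos_rootE_C: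
  assumes "\<beta> \<in> pos_roots \<Phi> \<alpha> n"
  obtains (diff) a b where "a < b" "b \<le> long_index" "\<beta> = diff_root a b"
    | (sum) a b where "a \<le> b" "b \<le> long_index" "\<beta> = sum_root a b"
  using assms pos_roots_C_iff by blast

lemma coord_diff_root: "j < n \<Longrightarrow> coord (diff_root a b) j = interval_coeffs a b j"
  and coord_sum_root: "j < n \<Longrightarrow> coord (sum_root a b) j = plus_coeffs long_index a b j"
  by (simp_all add: coord_lincomb)

lemma highest_root_C: "highest_root \<Phi> \<alpha> n = sum_root 0 0"
proof (rule highest_rootI)
  show "sum_root 0 0 \<in> pos_roots \<Phi> \<alpha> n"
    unfolding pos_roots_C_iff by blast
next
  fix \<beta> assume "\<beta> \<in> pos_roots \<Phi> \<alpha> n"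
  then show "root_le \<alpha> n \<beta> (sum_root 0 0)"
  proof (cases rule: pos_rootE_C)
    case (diff a b)
    then show ?thesis using n_eq_Suc_long_index
      by (auto simp: root_le_iff coord_diff_root coord_sum_root interval_coeffs_def plus_coeffs_def)
  next
    case (sum a b)
    then show ?thesis using n_eq_Suc_long_index
      by (auto simp: root_le_iff coord_sum_root interval_coeffs_def plus_coeffs_def)
  qed
qed

lemma coord_le_C: "\<beta> \<in> \<Phi> \<Longrightarrow> coord \<beta> i \<le> (if i = long_index then 1 else 2)"
proof (cases "i < n")
  case True
  assume "\<beta> \<in> \<Phi>"
  then consider "\<beta> \<in> pos_roots \<Phi> \<alpha> n" | "- \<beta> \<in> pos_roots \<Phi> \<alpha> n"
    using pos_root_or_uminus by blast
  then show ?thesis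
  proof cases
    case 1
    then show ?thesis
    proof (cases rule: pos_rootE_C)
      case (diff a b)
      then show ?thesis using True by (simp add: coord_diff_root interval_coeffs_def)
    next
      case (sum a b)
      then show ?thesis using True by (simp add: coord_sum_root interval_coeffs_def plus_coeffs_def)
    qed
  next
    case 2
    then show ?thesis using True by (auto simp: pos_roots_iff coord_uminus)
  qed
qed (simp add: coord_out_of_range)

lemma std_parabolic_face_C:
  "i < n \<Longrightarrow> std_parabolic_face \<Phi> \<alpha> n i = convex hull (coord_level i (if i = long_index then 1 else 2))"
  using n_eq_Suc_long_index
  by (simp add: std_parabolic_face_eq highest_root_C coord_sum_root plus_coeffs_def interval_coeffs_def)

lemma sum_root_in_coord_level_long: "a \<le> long_index \<Longrightarrow> sum_root a long_index \<in> coord_level long_index 1"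
  using sum_root_in[of a long_index] n_eq_Suc_long_index
  by (auto simp: coord_level_def pos_roots_iff coord_sum_root plus_coeffs_def interval_coeffs_def)

lemma span_coord_level_long: "span (coord_level long_index 1) = UNIV"
proof (rule span_eq_UNIV_if_simple_roots)
  fix j assume j: "j < n"
  have level: "sum_root a long_index \<in> span (coord_level long_index 1)" if "a \<le> long_index" for a
    using that sum_root_in_coord_level_long by (auto intro: span_base)
  show "\<alpha> j \<in> span (coord_level long_index 1)"
  proof (cases "j = long_index")
    case True
    have "\<alpha> j = sum_root long_index long_index"
      using j True by (intro lincomb_eq_simple_root[symmetric]) (auto simp: plus_coeffs_def interval_coeffs_def)
    then show ?thesis using level[of long_index] by simp
  next
    case False
    then have "j < long_index" using j n_eq_Suc_long_index by simp
    moreover from this have "\<alpha> j = sum_root j long_index - sum_root (Suc j) long_index"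
      unfolding lincomb_diff using j
      by (intro lincomb_eq_simple_root[symmetric]) (auto simp: plus_coeffs_def interval_coeffs_def)
    ultimately show ?thesis using level[of j] level[of "Suc j"] by (simp add: span_diff)
  qed
qed

lemma std_parabolic_face_long_facet:
  "std_parabolic_face \<Phi> \<alpha> n long_index face_of convex hull \<Phi>"
  "aff_dim (std_parabolic_face \<Phi> \<alpha> n long_index) = int n - 1"
proof -
  have face: "std_parabolic_face \<Phi> \<alpha> n long_index = convex hull (coord_level long_index 1)"
    using std_parabolic_face_C[of long_index] n_eq_Suc_long_index by simp
  show "std_parabolic_face \<Phi> \<alpha> n long_index face_of convex hull \<Phi>"
    unfolding face using hull_coord_level_face_of[of long_index 1] coord_le_C[of _ long_index] by simp
  have "dim (coord_level long_index 1) = n"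
    using span_coord_level_long dim_eq dim_span[of "coord_level long_index 1"] by simp
  then show "aff_dim (std_parabolic_face \<Phi> \<alpha> n long_index) = int n - 1"
    unfolding face using aff_dim_hull_coord_level[of 1 long_index] by simp
qed

text \<open>A root with coefficient 2 at a short simple root \<open>\<alpha> i\<close> has coefficient 1 at \<open>\<alpha> long_index\<close>,
  so the face lies in the hyperplane orthogonal to \<open>\<omega> i - 2 \<omega> long_index\<close> and is too small.\<close>
lemma aff_dim_std_parabolic_face_short:
  assumes i: "i < long_index"
  shows "aff_dim (std_parabolic_face \<Phi> \<alpha> n i) < int n - 1"
proof -
  let ?v = "fund_coweight \<alpha> n i - 2 *\<^sub>R fund_coweight \<alpha> n long_index"
  have level_long: "coord \<beta> long_index = 1" if "\<beta> \<in> coord_level i 2" for \<beta>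
  proof -
    have "\<beta> \<in> pos_roots \<Phi> \<alpha> n" "coord \<beta> i = 2" using that by (auto simp: coord_level_def)
    from this(1) show ?thesis
    proof (cases rule: pos_rootE_C)
      case (diff a b)
      then show ?thesis using \<open>coord \<beta> i = 2\<close> i n_eq_Suc_long_index
        by (simp add: coord_diff_root interval_coeffs_def split: if_splits)
    next
      case (sum a b)
      then show ?thesis using n_eq_Suc_long_index by (simp add: coord_sum_root plus_coeffs_def interval_coeffs_def)
    qed
  qed
  have "?v \<bullet> x = coord x i - 2 * coord x long_index" for x
    by (simp add: coord_def inner_diff_right inner_commute)
  then have "coord_level i 2 \<subseteq> {x. ?v \<bullet> x = 0}"
    using level_long by (auto simp: coord_level_def)
  then have "dim (coord_level i 2) \<le> dim {x. ?v \<bullet> x = 0}"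
    by (rule dim_subset)
  also have "\<dots> = n - 1"
  proof -
    have "\<alpha> long_index \<bullet> ?v = -2"
      using i n_eq_Suc_long_index by (simp add: inner_diff_right inner_fund_coweight)
    then have "?v \<noteq> 0" by auto
    then show ?thesis using dim_hyperplane dim_eq by metis
  qed
  finally show ?thesis
    using aff_dim_hull_coord_level[of 2 i] std_parabolic_face_C[of i] i n_eq_Suc_long_index by simp
qed

text \<open>A short root \<open>\<epsilon> a - \<epsilon> b\<close> in an abelian ideal drags \<open>\<epsilon> a - \<epsilon> long_index\<close> and
  \<open>\<epsilon> a + \<epsilon> long_index\<close> into it, and these two add up to the root \<open>2 \<epsilon> a\<close>.\<close>
lemma abelian_ideal_C_subset:
  assumes J: "abelian_ideal \<Phi> \<alpha> n J"
  shows "J \<subseteq> coord_level long_index 1"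
proof
  fix \<beta> assume "\<beta> \<in> J"
  then have "\<beta> \<in> pos_roots \<Phi> \<alpha> n" using J unfolding abelian_ideal_def by blast
  then show "\<beta> \<in> coord_level long_index 1"
  proof (cases rule: pos_rootE_C)
    case (sum a b)
    then show ?thesis using sum_root_in[of a b] n_eq_Suc_long_index
      by (auto simp: coord_level_def pos_roots_iff coord_sum_root plus_coeffs_def interval_coeffs_def)
  next
    case (diff a b)
    have up: "\<gamma> \<in> J" if "\<delta> \<in> J" "\<gamma> \<in> pos_roots \<Phi> \<alpha> n" "root_le \<alpha> n \<delta> \<gamma>" for \<delta> \<gamma>
      using J that unfolding abelian_ideal_def by blast
    have "a < long_index" using diff by simp
    then have "diff_root a long_index \<in> pos_roots \<Phi> \<alpha> n" "sum_root a long_index \<in> pos_roots \<Phi> \<alpha> n"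
      unfolding pos_roots_C_iff by (blast intro: less_imp_le)+
    moreover have "root_le \<alpha> n \<beta> (diff_root a long_index)"
      "root_le \<alpha> n (diff_root a long_index) (sum_root a long_index)"
      using diff n_eq_Suc_long_index
      by (auto simp: root_le_iff coord_diff_root coord_sum_root interval_coeffs_def plus_coeffs_def)
    ultimately have "diff_root a long_index \<in> J" "sum_root a long_index \<in> J"
      using up \<open>\<beta> \<in> J\<close> by blast+
    then have "diff_root a long_index + sum_root a long_index \<notin> \<Phi>"
      using J unfolding abelian_ideal_def by blast
    moreover have "diff_root a long_index + sum_root a long_index = sum_root a a"
      unfolding lincomb_add by (intro lincomb_cong) (auto simp: plus_coeffs_def interval_coeffs_def)
    ultimately show ?thesis using sum_root_in[of a a] diff by simp
  qed
qed

lemma max_abelian_ideal_C_iff: "max_abelian_ideal \<Phi> \<alpha> n I \<longleftrightarrow> I = coord_level long_index 1"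
proof -
  have "abelian_ideal \<Phi> \<alpha> n (coord_level long_index 1)"
    using coord_level_abelian_ideal[of long_index 1] coord_le_C[of _ long_index] by simp
  then show ?thesis
    using abelian_ideal_C_subset unfolding max_abelian_ideal_def by blast
qed

theorem std_parabolic_facets_C:
  "std_parabolic_facets \<Phi> \<alpha> n = {convex hull I | I. max_abelian_ideal \<Phi> \<alpha> n I}"
proof -
  have "std_parabolic_facets \<Phi> \<alpha> n = {std_parabolic_face \<Phi> \<alpha> n long_index}"
  proof -
    have "i = long_index" if "i < n" "aff_dim (std_parabolic_face \<Phi> \<alpha> n i) = int n - 1" for i
      using that aff_dim_std_parabolic_face_short[of i] n_eq_Suc_long_index by fastforce
    then show ?thesis
      using std_parabolic_face_long_facet n_eq_Suc_long_index
      unfolding std_parabolic_facets_def by auto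
  qed
  also have "\<dots> = {convex hull I | I. max_abelian_ideal \<Phi> \<alpha> n I}"
    using std_parabolic_face_C[of long_index] n_eq_Suc_long_index by (simp add: max_abelian_ideal_C_iff)
  finally show ?thesis .
qed

end

theorem theorem5p7:
  fixes \<Phi> :: "'a::euclidean_space set" and \<alpha> :: "nat \<Rightarrow> 'a" and n :: nat
  assumes "root_system \<Phi>"
    and "n = DIM('a)"
    and "is_base \<Phi> \<alpha> n"
    and "has_cartan \<alpha> n (cartan_A n) \<or> (n \<ge> 2 \<and> has_cartan \<alpha> n (cartan_C n))"
  shows "{std_parabolic_face \<Phi> \<alpha> n i | i. i < n \<and>
            std_parabolic_face \<Phi> \<alpha> n i face_of convex hull \<Phi> \<and>
            aff_dim (std_parabolic_face \<Phi> \<alpha> n i) = int n - 1}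
         = {convex hull I | I. max_abelian_ideal \<Phi> \<alpha> n I}"
  using assms(4)
proof
  assume "has_cartan \<alpha> n (cartan_A n)"
  then interpret root_base_A \<Phi> \<alpha> n
    by unfold_locales (use assms in auto)
  show ?thesis using std_parabolic_facets_A unfolding std_parabolic_facets_def .
next
  assume "n \<ge> 2 \<and> has_cartan \<alpha> n (cartan_C n)"
  then interpret root_base_C \<Phi> \<alpha> n
    by unfold_locales (use assms in auto)
  show ?thesis using std_parabolic_facets_C unfolding std_parabolic_facets_def .
qed

end
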